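(* Let $Q$ be a probability distribution over functions $g:\mathcal X\to\mathbb R$, and fix an integer $k\ge 1$. Let $G=\{g_1,\dots,g_k\}\sim Q^k$ and $G'=\{g'_1,\dots,g'_k\}\sim Q^k$ be independent (each consisting of $k$ i.i.d. draws from $Q$). Define \[ f_1=\arg\min_{f\in V(G)}\mathrm{MSE}(f),\qquad f_2=\arg\min_{f\in V(G')}\mathrm{MSE}(f). \] Then \[ \mathbb E_{f_1,f_2}\big[D(f_1,f_2)\big]\le 4\big(\bar R_k-\bar R_{2k}\big). \]
   Context: $P$ is a probability distribution on $\mathcal X\times\mathcal Y$ with $\mathcal X\subseteq\mathbb R^m$ and $\mathcal Y\subseteq\mathbb R$; unless stated otherwise, expectations are over $(x,y)\sim P$ (or its $x$-marginal), and all functions are assumed square-integrable. For $f:\mathcal X\to\mathbb R$, $\mathrm{MSE}(f)=\mathbb E[(y-f(x))^2]$. The disagreement of two functions is $D(f_1,f_2)=\mathbb E[(f_1(x)-f_2(x))^2]$. For a finite multiset $G$ of functions $\mathcal X\to\mathbb R$, $V(G)$ denotes their linear span and $R(G)=\min_{f\in V(G)}\mathrm{MSE}(f)$. For $t\in\mathbb N$, $\bar R_t=\mathbb E_{\{g_1,\dots,g_t\}\sim Q^t}[R(\{g_1,\dots,g_t\})]$, the expectation over $t$ i.i.d. draws from $Q$. In the conclusion, the outer expectation is over the random draws of $G$ and $G'$. *)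

theory Defs
  imports "HOL-Probability.Probability"
begin

definition MSE :: "((real^'m) \<times> real) measure \<Rightarrow> (real^'m \<Rightarrow> real) \<Rightarrow> real" where
  "MSE P f = (\<integral>z. (snd z - f (fst z))^2 \<partial>P)"

definition Dis :: "((real^'m) \<times> real) measure \<Rightarrow> (real^'m \<Rightarrow> real) \<Rightarrow> (real^'m \<Rightarrow> real) \<Rightarrow> real" where
  "Dis P f1 f2 = (\<integral>z. (f1 (fst z) - f2 (fst z))^2 \<partial>P)"

definition V :: "nat \<Rightarrow> (nat \<Rightarrow> (real^'m \<Rightarrow> real)) \<Rightarrow> (real^'m \<Rightarrow> real) set" where
  "V t G = {(\<lambda>x. \<Sum>i<t. c i * G i x) | c. True}"

definition R :: "((real^'m) \<times> real) measure \<Rightarrow> nat \<Rightarrow> (nat \<Rightarrow> (real^'m \<Rightarrow> real)) \<Rightarrow> real" where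
  "R P t G = (INF f\<in>V t G. MSE P f)"

definition Rbar :: "((real^'m) \<times> real) measure \<Rightarrow> (real^'m \<Rightarrow> real) measure \<Rightarrow> nat \<Rightarrow> real" where
  "Rbar P Q t = (\<integral>G. R P t G \<partial>(PiM {..<t} (\<lambda>_. Q)))"

definition fit :: "((real^'m) \<times> real) measure \<Rightarrow> nat \<Rightarrow> (nat \<Rightarrow> (real^'m \<Rightarrow> real)) \<Rightarrow> (real^'m \<Rightarrow> real)" where
  "fit P t G = (SOME f. f \<in> V t G \<and> (\<forall>h\<in>V t G. MSE P f \<le> MSE P h))"

end

theory Submission
  imports Defs
begin

text \<open>Let u = y - f_1(x) and u' = y - f_2(x) be the residuals of the two least-squares fits.
  The parallelogram law gives
  D(f_1, f_2) = E (u - u')^2 = 2 E u^2 + 2 E u'^2 - 4 E ((u + u') / 2)^2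
             = 2 R(G) + 2 R(G') - 4 MSE((f_1 + f_2) / 2),
  and the midpoint (f_1 + f_2) / 2 lies in the span of the 2k functions of G and G' together,
  so its MSE is at least R(G \<union> G'). Since G and G' are independent, G \<union> G' is a sample of
  2k i.i.d. draws, and taking expectations yields 2 Rbar_k + 2 Rbar_k - 4 Rbar_2k.
  Two technical points: least-squares fits exist (orthogonal projection onto a finite span,
  built by Gram--Schmidt in the semi-inner product space L2(P)), and R is a measurable function
  of the draws (by continuity it is an infimum over countably many rational coefficient vectors).\<close>

definition residual :: "('z \<Rightarrow> real) \<Rightarrow> (nat \<Rightarrow> 'z \<Rightarrow> real) \<Rightarrow> nat \<Rightarrow> (nat \<Rightarrow> real) \<Rightarrow> 'z \<Rightarrow> real"
  where "residual t g n c = (\<lambda>z. t z - (\<Sum>i<n. c i * g i z))"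

locale semi_inner_space =
  fixes L :: "('z \<Rightarrow> real) set"
    and ip :: "('z \<Rightarrow> real) \<Rightarrow> ('z \<Rightarrow> real) \<Rightarrow> real"
  assumes zero_in_L: "(\<lambda>z. 0) \<in> L"
    and add_in_L: "u \<in> L \<Longrightarrow> v \<in> L \<Longrightarrow> (\<lambda>z. u z + v z) \<in> L"
    and scale_in_L: "u \<in> L \<Longrightarrow> (\<lambda>z. a * u z) \<in> L"
    and ip_add_left: "u \<in> L \<Longrightarrow> v \<in> L \<Longrightarrow> w \<in> L \<Longrightarrow> ip (\<lambda>z. u z + v z) w = ip u w + ip v w"
    and ip_scale_left: "u \<in> L \<Longrightarrow> w \<in> L \<Longrightarrow> ip (\<lambda>z. a * u z) w = a * ip u w"
    and ip_commute: "u \<in> L \<Longrightarrow> v \<in> L \<Longrightarrow> ip u v = ip v u"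
    and ip_self_nonneg: "u \<in> L \<Longrightarrow> 0 \<le> ip u u"
begin

lemma diff_in_L: "u \<in> L \<Longrightarrow> v \<in> L \<Longrightarrow> (\<lambda>z. u z - v z) \<in> L"
  using add_in_L[of u "\<lambda>z. (-1) * v z"] scale_in_L[of v "-1"] by simp

lemma lincomb_in_L: "(\<And>i. i \<in> A \<Longrightarrow> g i \<in> L) \<Longrightarrow> (\<lambda>z. \<Sum>i\<in>A. c i * g i z) \<in> L"
proof (induction A rule: infinite_finite_induct)
  case (insert x F)
  then show ?case
    using add_in_L[OF scale_in_L[of "g x" "c x"], of "\<lambda>z. \<Sum>i\<in>F. c i * g i z"] by simp
qed (simp_all add: zero_in_L)

lemma residual_in_L: "t \<in> L \<Longrightarrow> (\<And>i. i < n \<Longrightarrow> g i \<in> L) \<Longrightarrow> residual t g n c \<in> L"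
  unfolding residual_def by (intro diff_in_L lincomb_in_L) auto

lemma ip_diff_left: "u \<in> L \<Longrightarrow> v \<in> L \<Longrightarrow> w \<in> L \<Longrightarrow> ip (\<lambda>z. u z - v z) w = ip u w - ip v w"
  using ip_add_left[of u "\<lambda>z. (-1) * v z" w] ip_scale_left[of v w "-1"] scale_in_L[of v "-1"]
  by simp

lemma ip_zero_left: "w \<in> L \<Longrightarrow> ip (\<lambda>z. 0) w = 0"
  using ip_scale_left[of "\<lambda>z. 0" w 0] zero_in_L by simp

lemma ip_lincomb_left:
  "(\<And>i. i \<in> A \<Longrightarrow> g i \<in> L) \<Longrightarrow> w \<in> L \<Longrightarrow>
    ip (\<lambda>z. \<Sum>i\<in>A. c i * g i z) w = (\<Sum>i\<in>A. c i * ip (g i) w)"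
proof (induction A rule: infinite_finite_induct)
  case (insert x F)
  have "ip (\<lambda>z. \<Sum>i\<in>insert x F. c i * g i z) w
      = ip (\<lambda>z. c x * g x z + (\<Sum>i\<in>F. c i * g i z)) w"
    using insert.hyps by simp
  also have "\<dots> = c x * ip (g x) w + ip (\<lambda>z. \<Sum>i\<in>F. c i * g i z) w"
    using insert by (simp add: ip_add_left scale_in_L lincomb_in_L ip_scale_left)
  finally show ?case
    using insert by simp
qed (simp_all add: ip_zero_left)

lemma ip_lincomb_right:
  "(\<And>i. i \<in> A \<Longrightarrow> g i \<in> L) \<Longrightarrow> w \<in> L \<Longrightarrow>
    ip w (\<lambda>z. \<Sum>i\<in>A. c i * g i z) = (\<Sum>i\<in>A. c i * ip w (g i))"
  by (simp add: ip_commute[of w] lincomb_in_L ip_lincomb_left)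

lemma ip_add_right: "u \<in> L \<Longrightarrow> v \<in> L \<Longrightarrow> w \<in> L \<Longrightarrow> ip w (\<lambda>z. u z + v z) = ip w u + ip w v"
  by (simp add: ip_commute[of w] add_in_L ip_add_left)

lemma ip_diff_right: "u \<in> L \<Longrightarrow> v \<in> L \<Longrightarrow> w \<in> L \<Longrightarrow> ip w (\<lambda>z. u z - v z) = ip w u - ip w v"
  by (simp add: ip_commute[of w] diff_in_L ip_diff_left)

lemma ip_scale_right: "u \<in> L \<Longrightarrow> w \<in> L \<Longrightarrow> ip w (\<lambda>z. a * u z) = a * ip w u"
  by (simp add: ip_commute[of w] scale_in_L ip_scale_left)

lemma ip_self_add:
  assumes "u \<in> L" "v \<in> L"
  shows "ip (\<lambda>z. u z + v z) (\<lambda>z. u z + v z) = ip u u + 2 * ip u v + ip v v"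
  using assms by (simp add: ip_add_left ip_add_right add_in_L ip_commute[of v u])

lemma ip_self_diff_scale:
  assumes "u \<in> L" "v \<in> L"
  shows "ip (\<lambda>z. u z - s * v z) (\<lambda>z. u z - s * v z) = ip u u - 2 * s * ip u v + s\<^sup>2 * ip v v"
  using assms
  by (simp add: ip_diff_left ip_diff_right ip_scale_left ip_scale_right diff_in_L scale_in_L
      ip_commute[of v u] power2_eq_square algebra_simps)

lemma ip_eq_0_if_self_eq_0:
  assumes u: "u \<in> L" and v: "v \<in> L" and null: "ip v v = 0"
  shows "ip u v = 0"
proof (rule ccontr)
  assume "ip u v \<noteq> 0"
  define s where "s = (ip u u + 1) / (2 * ip u v)"
  have "ip (\<lambda>z. u z - s * v z) (\<lambda>z. u z - s * v z) = -1"
    unfolding ip_self_diff_scale[OF u v] null using \<open>ip u v \<noteq> 0\<close> by (simp add: s_def field_simps)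
  then show False
    using ip_self_nonneg[OF diff_in_L[OF u scale_in_L[OF v, of s]]] by simp
qed

lemma residual_orthogonal_imp_least:
  assumes t: "t \<in> L" and g: "\<And>i. i < n \<Longrightarrow> g i \<in> L"
    and orth: "\<And>j. j < n \<Longrightarrow> ip (residual t g n c) (g j) = 0"
  shows "ip (residual t g n c) (residual t g n c) \<le> ip (residual t g n a) (residual t g n a)"
proof -
  define e where "e = residual t g n c"
  define W where "W = (\<lambda>z. \<Sum>i<n. (c i - a i) * g i z)"
  have e: "e \<in> L" and W: "W \<in> L"
    unfolding e_def W_def using t g by (auto intro: residual_in_L lincomb_in_L)
  have "residual t g n a = (\<lambda>z. e z + W z)"
    by (simp add: e_def W_def residual_def algebra_simps sum_subtractf)
  moreover have "ip e W = (\<Sum>i<n. (c i - a i) * ip e (g i))"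
    unfolding W_def by (rule ip_lincomb_right) (use g e in auto)
  then have "ip e W = 0"
    using orth by (simp add: e_def)
  ultimately have "ip (residual t g n a) (residual t g n a) = ip e e + ip W W"
    using ip_self_add[OF e W] by simp
  then show ?thesis
    using ip_self_nonneg[OF W] by (simp add: e_def)
qed

text \<open>Gram--Schmidt: with e and r the residuals of t and g n against g 0, ..., g (n - 1),
  the vector e - s r is orthogonal to g n for s = ip e r / ip r r; if ip r r = 0 then also
  ip e r = 0 and s = 0 works.\<close>

lemma residual_orthogonal_exists:
  "t \<in> L \<Longrightarrow> (\<And>i. i < n \<Longrightarrow> g i \<in> L) \<Longrightarrow> \<exists>c. \<forall>j<n. ip (residual t g n c) (g j) = 0"
proof (induction n arbitrary: t)
  case 0
  then show ?case by simp
next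
  case (Suc n)
  have t: "t \<in> L" and g: "\<And>i. i < n \<Longrightarrow> g i \<in> L" and gn: "g n \<in> L"
    using Suc.prems by auto
  obtain c where c: "\<forall>j<n. ip (residual t g n c) (g j) = 0"
    using Suc.IH[OF t g] by blast
  obtain d where d: "\<forall>j<n. ip (residual (g n) g n d) (g j) = 0"
    using Suc.IH[OF gn g] by blast
  define e where "e = residual t g n c"
  define r where "r = residual (g n) g n d"
  have e: "e \<in> L" and r: "r \<in> L"
    unfolding e_def r_def using t gn g by (auto intro: residual_in_L)
  define s where "s = (if ip r r = 0 then 0 else ip e r / ip r r)"
  have s: "ip e r - s * ip r r = 0"
    using ip_eq_0_if_self_eq_0[OF e r] by (auto simp: s_def)
  define cs where "cs = (\<lambda>i. if i = n then s else c i - s * d i)"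
  have "residual t g (Suc n) cs = (\<lambda>z. e z - s * r z)"
    by (simp add: cs_def e_def r_def residual_def algebra_simps sum_subtractf sum_distrib_left)
  moreover have "ip (\<lambda>z. e z - s * r z) (g j) = 0" if "j < Suc n" for j
  proof (cases "j = n")
    case True
    have gn_eq: "g n = (\<lambda>z. r z + (\<Sum>i<n. d i * g i z))"
      by (simp add: r_def residual_def)
    have span: "(\<lambda>z. \<Sum>i<n. d i * g i z) \<in> L"
      using g by (intro lincomb_in_L) auto
    have ip_gn: "ip x (g n) = ip x r + (\<Sum>i<n. d i * ip x (g i))" if "x \<in> L" for x
      unfolding gn_eq using ip_add_right[OF r span that] ip_lincomb_right[of "{..<n}" g x d] that g
      by simp
    have "ip e (g n) = ip e r" "ip r (g n) = ip r r"
      using ip_gn[OF e] ip_gn[OF r] c d by (simp_all add: e_def r_def)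
    then show ?thesis
      using True s e r gn by (simp add: ip_diff_left ip_scale_left scale_in_L)
  next
    case False
    then show ?thesis
      using that c d e r g by (simp add: ip_diff_left ip_scale_left scale_in_L e_def r_def)
  qed
  ultimately show ?case
    by metis
qed

lemma least_squares_exists:
  "t \<in> L \<Longrightarrow> (\<And>i. i < n \<Longrightarrow> g i \<in> L) \<Longrightarrow>
    \<exists>c. \<forall>a. ip (residual t g n c) (residual t g n c) \<le> ip (residual t g n a) (residual t g n a)"
  by (metis residual_orthogonal_exists residual_orthogonal_imp_least)

lemma ip_residual_self:
  assumes t: "t \<in> L" and g: "\<And>i. i < n \<Longrightarrow> g i \<in> L"
  shows "ip (residual t g n c) (residual t g n c)
    = ip t t - 2 * (\<Sum>i<n. c i * ip t (g i)) + (\<Sum>i<n. \<Sum>j<n. c i * c j * ip (g i) (g j))"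
proof -
  define S where "S = (\<lambda>z. \<Sum>i<n. c i * g i z)"
  have S: "S \<in> L"
    unfolding S_def using g by (intro lincomb_in_L) auto
  have tS: "ip t S = (\<Sum>i<n. c i * ip t (g i))"
    unfolding S_def by (rule ip_lincomb_right) (use t g in auto)
  have "ip S S = (\<Sum>i<n. c i * ip (g i) S)"
    unfolding S_def by (rule ip_lincomb_left) (use g S in \<open>auto simp: S_def\<close>)
  moreover have "ip (g i) S = (\<Sum>j<n. c j * ip (g i) (g j))" if "i < n" for i
    unfolding S_def by (rule ip_lincomb_right) (use g that in auto)
  ultimately have SS: "ip S S = (\<Sum>i<n. \<Sum>j<n. c i * c j * ip (g i) (g j))"
    by (simp add: sum_distrib_left mult.assoc)
  have "residual t g n c = (\<lambda>z. t z - 1 * S z)"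
    by (simp add: residual_def S_def)
  then show ?thesis
    using ip_self_diff_scale[OF t S, of 1] tS SS by simp
qed

end

definition square_integrable :: "'a measure \<Rightarrow> ('a \<Rightarrow> real) set"
  where "square_integrable M = {u \<in> borel_measurable M. integrable M (\<lambda>z. (u z)\<^sup>2)}"

definition L2_inner :: "'a measure \<Rightarrow> ('a \<Rightarrow> real) \<Rightarrow> ('a \<Rightarrow> real) \<Rightarrow> real"
  where "L2_inner M u v = (\<integral>z. u z * v z \<partial>M)"

lemma integrable_mult_if_square_integrable:
  assumes "u \<in> square_integrable M" "v \<in> square_integrable M"
  shows "integrable M (\<lambda>z. u z * v z)"
proof (rule Bochner_Integration.integrable_bound)
  show "integrable M (\<lambda>z. (u z)\<^sup>2 + (v z)\<^sup>2)"
    using assms by (simp add: square_integrable_def)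
  have "\<bar>a * b\<bar> \<le> a\<^sup>2 + b\<^sup>2" for a b :: real
  proof -
    have "2 * (\<bar>a\<bar> * \<bar>b\<bar>) \<le> a\<^sup>2 + b\<^sup>2"
      using sum_squares_bound[of "\<bar>a\<bar>" "\<bar>b\<bar>"] by (simp add: mult.assoc)
    then show ?thesis
      unfolding abs_mult using mult_nonneg_nonneg[OF abs_ge_zero abs_ge_zero, of a b] by linarith
  qed
  then show "AE z in M. norm (u z * v z) \<le> norm ((u z)\<^sup>2 + (v z)\<^sup>2)"
    by simp
qed (use assms in \<open>auto simp: square_integrable_def\<close>)

interpretation L2: semi_inner_space "square_integrable M" "L2_inner M" for M
proof
  show "(\<lambda>z. 0) \<in> square_integrable M"
    by (simp add: square_integrable_def)
next
  fix u v assume u: "u \<in> square_integrable M" and v: "v \<in> square_integrable M"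
  show "(\<lambda>z. u z + v z) \<in> square_integrable M"
    using u v integrable_mult_if_square_integrable[OF u v]
    by (auto simp: square_integrable_def power2_sum mult.assoc)
next
  fix u :: "'a \<Rightarrow> real" and a :: real assume "u \<in> square_integrable M"
  then show "(\<lambda>z. a * u z) \<in> square_integrable M"
    by (auto simp: square_integrable_def power_mult_distrib)
next
  fix u v w assume "u \<in> square_integrable M" "v \<in> square_integrable M" "w \<in> square_integrable M"
  then show "L2_inner M (\<lambda>z. u z + v z) w = L2_inner M u w + L2_inner M v w"
    unfolding L2_inner_def by (simp add: distrib_right integrable_mult_if_square_integrable)
next
  fix u w :: "'a \<Rightarrow> real" and a :: real
  show "L2_inner M (\<lambda>z. a * u z) w = a * L2_inner M u w"
    unfolding L2_inner_def by (simp add: mult.assoc)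
qed (simp_all add: L2_inner_def mult.commute)

lemma MSE_nonneg: "0 \<le> MSE P f"
  unfolding MSE_def by (rule integral_nonneg_AE) simp

lemma Dis_nonneg: "0 \<le> Dis P f1 f2"
  unfolding Dis_def by (rule integral_nonneg_AE) simp

lemma V_eq_range: "V n G = range (\<lambda>c x. \<Sum>i<n. c i * G i x)"
  by (auto simp: V_def)

lemma R_le_MSE: "f \<in> V n G \<Longrightarrow> R P n G \<le> MSE P f"
  unfolding R_def by (rule cINF_lower) (auto intro: MSE_nonneg simp: bdd_below_def)

lemma R_nonneg: "0 \<le> R P n G"
  unfolding R_def by (rule cINF_greatest) (auto simp: MSE_nonneg V_def)

lemma R_le_MSE_zero: "R P n G \<le> MSE P (\<lambda>x. 0)"
  by (rule R_le_MSE) (auto simp: V_def intro: exI[of _ "\<lambda>_. 0"])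

lemma Dis_eq_parallelogram:
  assumes u1: "(\<lambda>z. snd z - f1 (fst z)) \<in> square_integrable P"
    and u2: "(\<lambda>z. snd z - f2 (fst z)) \<in> square_integrable P"
  shows "Dis P f1 f2 = 2 * MSE P f1 + 2 * MSE P f2 - 4 * MSE P (\<lambda>x. (f1 x + f2 x) / 2)"
proof -
  define u where "u = (\<lambda>z. (1/2) * ((snd z - f1 (fst z)) + (snd z - f2 (fst z))))"
  have "u \<in> square_integrable P"
    unfolding u_def using u1 u2 by (intro L2.scale_in_L L2.add_in_L)
  then have "Dis P f1 f2 = (\<integral>z. 2 * (snd z - f1 (fst z))\<^sup>2 + 2 * (snd z - f2 (fst z))\<^sup>2 - 4 * (u z)\<^sup>2 \<partial>P)"
    unfolding Dis_def u_def
    by (intro Bochner_Integration.integral_cong refl) (simp add: power2_eq_square algebra_simps)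
  also have "\<dots> = 2 * MSE P f1 + 2 * MSE P f2 - 4 * (\<integral>z. (u z)\<^sup>2 \<partial>P)"
    using u1 u2 \<open>u \<in> square_integrable P\<close> by (simp add: MSE_def square_integrable_def)
  also have "(\<integral>z. (u z)\<^sup>2 \<partial>P) = MSE P (\<lambda>x. (f1 x + f2 x) / 2)"
    unfolding MSE_def u_def
    by (intro Bochner_Integration.integral_cong refl) (simp add: power2_eq_square algebra_simps)
  finally show ?thesis .
qed

definition append_draws :: "nat \<Rightarrow> (nat \<Rightarrow> 'a) \<times> (nat \<Rightarrow> 'a) \<Rightarrow> nat \<Rightarrow> 'a"
  where "append_draws k = (\<lambda>(G, G'). merge {..<k} {k..<2*k} (G, \<lambda>i\<in>{k..<2*k}. G' (i - k)))"

lemma append_draws_nth: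
  "i < 2 * k \<Longrightarrow> append_draws k (G, G') i = (if i < k then G i else G' (i - k))"
  by (auto simp: append_draws_def merge_def)

lemma sum_lessThan_add: "(\<Sum>i<m + n. f i) = (\<Sum>i<m. f i) + (\<Sum>i<n. f (m + i))"
  for f :: "nat \<Rightarrow> 'a::comm_monoid_add"
  by (induction n) (simp_all add: add.assoc)

lemma midpoint_in_V_append_draws:
  assumes "f1 \<in> V k G" and "f2 \<in> V k G'"
  shows "(\<lambda>x. (f1 x + f2 x) / 2) \<in> V (2 * k) (append_draws k (G, G'))"
proof -
  obtain c c' where f1: "f1 = (\<lambda>x. \<Sum>i<k. c i * G i x)" and f2: "f2 = (\<lambda>x. \<Sum>i<k. c' i * G' i x)"
    using assms by (auto simp: V_def)
  define w where "w = (\<lambda>i. if i < k then c i / 2 else c' (i - k) / 2)"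
  have "(\<Sum>i<2*k. w i * append_draws k (G, G') i x) = (f1 x + f2 x) / 2" for x
  proof -
    have "(\<Sum>i<2*k. w i * append_draws k (G, G') i x)
        = (\<Sum>i<k. w i * append_draws k (G, G') i x) + (\<Sum>i<k. w (k + i) * append_draws k (G, G') (k + i) x)"
      unfolding mult_2 by (rule sum_lessThan_add)
    also have "\<dots> = (\<Sum>i<k. c i * G i x / 2) + (\<Sum>i<k. c' i * G' i x / 2)"
      by (simp add: w_def append_draws_nth)
    finally show ?thesis
      by (simp add: f1 f2 sum_divide_distrib[symmetric] add_divide_distrib)
  qed
  then show ?thesis
    unfolding V_def by (intro CollectI exI[of _ w]) auto
qed

lemma
  fixes Q :: "'a measure" and k :: nat
  defines "shifted \<equiv> \<lambda>G' :: nat \<Rightarrow> 'a. \<lambda>i\<in>{k..<2*k}. G' (i - k)"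
  shows measurable_append_draws:
      "append_draws k \<in> PiM {..<k} (\<lambda>_. Q) \<Otimes>\<^sub>M PiM {..<k} (\<lambda>_. Q) \<rightarrow>\<^sub>M PiM {..<2*k} (\<lambda>_. Q)"
    and distr_append_draws: "prob_space Q \<Longrightarrow>
      distr (PiM {..<k} (\<lambda>_. Q) \<Otimes>\<^sub>M PiM {..<k} (\<lambda>_. Q)) (PiM {..<2*k} (\<lambda>_. Q)) (append_draws k)
        = PiM {..<2*k} (\<lambda>_. Q)"
proof -
  let ?Pk = "PiM {..<k} (\<lambda>_. Q)" and ?Psh = "PiM {k..<2*k} (\<lambda>_. Q)"
  have split: "{..<k} \<union> {k..<2*k} = {..<2*k}"
    by auto
  have shifted: "shifted \<in> ?Pk \<rightarrow>\<^sub>M ?Psh"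
    unfolding shifted_def by (rule measurable_restrict) (auto intro!: measurable_component_singleton)
  have pre: "map_prod id shifted \<in> ?Pk \<Otimes>\<^sub>M ?Pk \<rightarrow>\<^sub>M ?Pk \<Otimes>\<^sub>M ?Psh"
    unfolding map_prod_def split_beta' id_def
    by (intro measurable_Pair measurable_fst measurable_compose[OF measurable_snd shifted])
  have merge: "merge {..<k} {k..<2*k} \<in> ?Pk \<Otimes>\<^sub>M ?Psh \<rightarrow>\<^sub>M PiM {..<2*k} (\<lambda>_. Q)"
    using measurable_merge[of "{..<k}" "{k..<2*k}" "\<lambda>_. Q"] unfolding split .
  have comp: "append_draws k = merge {..<k} {k..<2*k} \<circ> map_prod id shifted"
    by (auto simp: append_draws_def shifted_def fun_eq_iff)
  show "append_draws k \<in> ?Pk \<Otimes>\<^sub>M ?Pk \<rightarrow>\<^sub>M PiM {..<2*k} (\<lambda>_. Q)"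
    unfolding comp using measurable_comp[OF pre merge] .
  assume Q: "prob_space Q"
  have "inj_on (\<lambda>i. i - k) {k..<2*k}" "(\<lambda>i. i - k) \<in> {k..<2*k} \<rightarrow> {..<k}"
    by (auto simp: inj_on_def)
  then have shifted_distr: "distr ?Pk ?Psh shifted = ?Psh"
    unfolding shifted_def using distr_PiM_reindex[of "{..<k}" "\<lambda>_. Q" "\<lambda>i. i - k"] Q by simp
  have "sigma_finite_measure (distr ?Pk ?Psh shifted)"
    unfolding shifted_distr using Q by (simp add: prob_space_PiM prob_space_imp_sigma_finite)
  from pair_measure_distr[OF measurable_id[of ?Pk] shifted this]
  have "distr (?Pk \<Otimes>\<^sub>M ?Pk) (?Pk \<Otimes>\<^sub>M ?Psh) (map_prod id shifted) = ?Pk \<Otimes>\<^sub>M ?Psh"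
    unfolding shifted_distr by (simp add: map_prod_def id_def distr_id)
  moreover interpret product_sigma_finite "\<lambda>_. Q"
    using Q by (simp add: product_sigma_finite_def prob_space_imp_sigma_finite)
  have "distr (?Pk \<Otimes>\<^sub>M ?Psh) (PiM {..<2*k} (\<lambda>_. Q)) (merge {..<k} {k..<2*k}) = PiM {..<2*k} (\<lambda>_. Q)"
    using distr_merge[of "{..<k}" "{k..<2*k}"] unfolding split by (simp add: disjoint_iff)
  ultimately show "distr (?Pk \<Otimes>\<^sub>M ?Pk) (PiM {..<2*k} (\<lambda>_. Q)) (append_draws k) = PiM {..<2*k} (\<lambda>_. Q)"
    unfolding comp by (simp add: distr_distr[OF merge pre, symmetric])
qed

lemma (in pair_prob_space) distr_pair_snd: "distr (M1 \<Otimes>\<^sub>M M2) M2 snd = M2"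
proof -
  have "distr (M1 \<Otimes>\<^sub>M M2) M2 snd = distr (distr (M1 \<Otimes>\<^sub>M M2) (M2 \<Otimes>\<^sub>M M1) (\<lambda>(x, y). (y, x))) M2 fst"
    by (subst distr_distr) (auto simp: comp_def split_beta')
  also have "\<dots> = M2"
    using pair_sigma_finite.distr_pair_swap[of M2 M1] M1.distr_pair_fst
    by (simp add: pair_sigma_finite_def M1.sigma_finite_measure_axioms M2.sigma_finite_measure_axioms)
  finally show ?thesis .
qed

lemma MSE_lincomb_eq_L2_inner:
  "MSE P (\<lambda>x. \<Sum>i<n. c i * G i x)
    = L2_inner P (residual snd (\<lambda>i z. G i (fst z)) n c) (residual snd (\<lambda>i z. G i (fst z)) n c)"
  by (simp add: MSE_def L2_inner_def residual_def power2_eq_square)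

text \<open>Extensionality (PiE) fixes the coefficients beyond n, which makes this set countable.\<close>

definition rational_coeffs :: "nat \<Rightarrow> (nat \<Rightarrow> real) set"
  where "rational_coeffs n = PiE {..<n} (\<lambda>_. \<rat>)"

lemma countable_rational_coeffs: "countable (rational_coeffs n)"
  unfolding rational_coeffs_def by (intro countable_PiE) (auto intro: countable_rat)

lemma rational_coeffs_approx:
  obtains r where "\<And>j. r j \<in> rational_coeffs n" and "\<And>i. i < n \<Longrightarrow> (\<lambda>j. r j i) \<longlonglongrightarrow> c i"
proof -
  have "\<exists>q. (\<forall>j. q j \<in> \<rat>) \<and> q \<longlonglongrightarrow> c i" for i
    using closure_sequential[of "c i" \<rat>] by (simp add: Rats_closure_real)
  then obtain q where q: "\<And>i. (\<forall>j. q i j \<in> \<rat>) \<and> q i \<longlonglongrightarrow> c i"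
    by metis
  show ?thesis
    by (rule that[of "\<lambda>j. \<lambda>i\<in>{..<n}. q i j"]) (use q in \<open>auto simp: rational_coeffs_def\<close>)
qed

locale regression_setting =
  fixes P :: "((real^'m) \<times> real) measure" and Q :: "(real^'m \<Rightarrow> real) measure"
  assumes prob_space_P: "prob_space P"
    and sets_P: "sets P = sets borel"
    and integrable_label_square: "integrable P (\<lambda>z. (snd z)\<^sup>2)"
    and prob_space_Q: "prob_space Q"
    and measurable_evaluation: "(\<lambda>(g, x). g x) \<in> borel_measurable (Q \<Otimes>\<^sub>M (borel :: (real^'m) measure))"
    and integrable_feature_square: "\<forall>g\<in>space Q. integrable P (\<lambda>z. (g (fst z))\<^sup>2)"
begin

abbreviation draws :: "nat \<Rightarrow> (nat \<Rightarrow> real^'m \<Rightarrow> real) measure"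
  where "draws n \<equiv> PiM {..<n} (\<lambda>_. Q)"

lemma measurable_fst_P: "fst \<in> P \<rightarrow>\<^sub>M (borel :: (real^'m) measure)"
  using measurable_fst[of "borel :: (real^'m) measure" "borel :: real measure"]
  by (simp add: borel_prod measurable_cong_sets[OF sets_P refl])

lemma measurable_snd_P: "snd \<in> borel_measurable P"
  using measurable_snd[of "borel :: (real^'m) measure" "borel :: real measure"]
  by (simp add: borel_prod measurable_cong_sets[OF sets_P refl])

lemma feature_square_integrable: "g \<in> space Q \<Longrightarrow> (\<lambda>z. g (fst z)) \<in> square_integrable P"
  using integrable_feature_square measurable_Pair2[OF measurable_evaluation, of g] measurable_fst_P
  by (auto simp: square_integrable_def intro: measurable_compose)

lemma residual_square_integrable:
  "\<forall>i<n. G i \<in> space Q \<Longrightarrow> residual snd (\<lambda>i z. G i (fst z)) n c \<in> square_integrable P"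
  using integrable_label_square measurable_snd_P feature_square_integrable
  by (intro L2.residual_in_L) (auto simp: square_integrable_def)

lemma fit_least_squares:
  assumes G: "\<forall>i<n. G i \<in> space Q"
  shows "fit P n G \<in> V n G" and "MSE P (fit P n G) = R P n G"
proof -
  have "\<exists>c. \<forall>a. L2_inner P (residual snd (\<lambda>i z. G i (fst z)) n c) (residual snd (\<lambda>i z. G i (fst z)) n c)
      \<le> L2_inner P (residual snd (\<lambda>i z. G i (fst z)) n a) (residual snd (\<lambda>i z. G i (fst z)) n a)"
    using G integrable_label_square measurable_snd_P feature_square_integrable
    by (intro L2.least_squares_exists) (auto simp: square_integrable_def)
  then obtain c where c: "\<forall>a. MSE P (\<lambda>x. \<Sum>i<n. c i * G i x) \<le> MSE P (\<lambda>x. \<Sum>i<n. a i * G i x)"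
    by (auto simp: MSE_lincomb_eq_L2_inner)
  have "\<exists>f. f \<in> V n G \<and> (\<forall>h\<in>V n G. MSE P f \<le> MSE P h)"
    using c by (intro exI[of _ "\<lambda>x. \<Sum>i<n. c i * G i x"]) (auto simp: V_def)
  then have fit: "fit P n G \<in> V n G \<and> (\<forall>h\<in>V n G. MSE P (fit P n G) \<le> MSE P h)"
    unfolding fit_def by (rule someI_ex)
  then show "fit P n G \<in> V n G"
    by blast
  show "MSE P (fit P n G) = R P n G"
    unfolding R_def using fit by (intro cInf_eq_minimum[symmetric]) auto
qed

lemma residual_V_square_integrable:
  assumes "\<forall>i<n. G i \<in> space Q" and "f \<in> V n G"
  shows "(\<lambda>z. snd z - f (fst z)) \<in> square_integrable P"
  using assms residual_square_integrable[of n G] by (auto simp: V_def residual_def)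

lemma Dis_fit_le:
  assumes G: "\<forall>i<k. G i \<in> space Q" and G': "\<forall>i<k. G' i \<in> space Q"
  shows "Dis P (fit P k G) (fit P k G')
    \<le> 2 * R P k G + 2 * R P k G' - 4 * R P (2 * k) (append_draws k (G, G'))"
proof -
  let ?f = "fit P k G" and ?f' = "fit P k G'"
  have "Dis P ?f ?f' = 2 * MSE P ?f + 2 * MSE P ?f' - 4 * MSE P (\<lambda>x. (?f x + ?f' x) / 2)"
    using G G' fit_least_squares(1) by (intro Dis_eq_parallelogram residual_V_square_integrable)
  moreover have "R P (2 * k) (append_draws k (G, G')) \<le> MSE P (\<lambda>x. (?f x + ?f' x) / 2)"
    using G G' fit_least_squares(1) by (intro R_le_MSE midpoint_in_V_append_draws)
  ultimately show ?thesis
    using fit_least_squares(2)[OF G] fit_least_squares(2)[OF G'] by linarith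
qed

lemma draws_component_in_space: "G \<in> space (draws n) \<Longrightarrow> i < n \<Longrightarrow> G i \<in> space Q"
  using PiE_mem[of G "{..<n}" "\<lambda>_. space Q" i] by (simp add: space_PiM)

lemma tendsto_MSE_lincomb:
  fixes n :: nat
  assumes G: "\<forall>i<n. G i \<in> space Q" and a: "\<And>i. i < n \<Longrightarrow> ((\<lambda>j. a j i) \<longlongrightarrow> c i) F"
  shows "((\<lambda>j. MSE P (\<lambda>x. \<Sum>i<n. a j i * G i x)) \<longlongrightarrow> MSE P (\<lambda>x. \<Sum>i<n. c i * G i x)) F"
proof -
  let ?t = "snd :: (real^'m) \<times> real \<Rightarrow> real" and ?g = "\<lambda>i z. G i (fst z)"
  have t: "?t \<in> square_integrable P" and g: "\<And>i. i < n \<Longrightarrow> ?g i \<in> square_integrable P"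
    using G integrable_label_square measurable_snd_P feature_square_integrable
    by (auto simp: square_integrable_def)
  have expand: "MSE P (\<lambda>x. \<Sum>i<n. b i * G i x) = L2_inner P ?t ?t - 2 * (\<Sum>i<n. b i * L2_inner P ?t (?g i))
        + (\<Sum>i<n. \<Sum>l<n. b i * b l * L2_inner P (?g i) (?g l))" for b
    using L2.ip_residual_self[OF t g] by (simp only: MSE_lincomb_eq_L2_inner)
  have "((\<lambda>j. L2_inner P ?t ?t - 2 * (\<Sum>i<n. a j i * L2_inner P ?t (?g i))
        + (\<Sum>i<n. \<Sum>l<n. a j i * a j l * L2_inner P (?g i) (?g l)))
      \<longlongrightarrow> L2_inner P ?t ?t - 2 * (\<Sum>i<n. c i * L2_inner P ?t (?g i))
        + (\<Sum>i<n. \<Sum>l<n. c i * c l * L2_inner P (?g i) (?g l))) F"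
    using a by (intro tendsto_intros) auto
  then show ?thesis
    unfolding expand .
qed

lemma R_eq_INF_rational_coeffs:
  assumes G: "\<forall>i<n. G i \<in> space Q"
  shows "R P n G = (INF c\<in>rational_coeffs n. MSE P (\<lambda>x. \<Sum>i<n. c i * G i x))"
proof -
  let ?mse = "\<lambda>c. MSE P (\<lambda>x. \<Sum>i<n. c i * G i x)"
  have bdd: "bdd_below (?mse ` A)" for A
    by (rule bdd_belowI[of _ 0]) (auto intro: MSE_nonneg)
  have "(INF c. ?mse c) \<le> (INF c\<in>rational_coeffs n. ?mse c)"
    by (rule cINF_superset_mono[OF _ bdd]) (auto simp: rational_coeffs_def PiE_eq_empty_iff)
  moreover have "(INF c\<in>rational_coeffs n. ?mse c) \<le> ?mse c" for c
  proof -
    obtain r where r: "\<And>j. r j \<in> rational_coeffs n" and lim: "\<And>i. i < n \<Longrightarrow> (\<lambda>j. r j i) \<longlonglongrightarrow> c i"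
      using rational_coeffs_approx[of n c] by blast
    show ?thesis
      by (rule LIMSEQ_le_const[OF tendsto_MSE_lincomb[of n G r c, OF G lim]])
        (use cINF_lower[OF bdd r] in auto)
  qed
  then have "(INF c\<in>rational_coeffs n. ?mse c) \<le> (INF c. ?mse c)"
    by (intro cINF_greatest) auto
  ultimately show ?thesis
    unfolding R_def V_eq_range image_image by (rule antisym)
qed

lemma borel_measurable_MSE_lincomb:
  "(\<lambda>G. MSE P (\<lambda>x. \<Sum>i<n. c i * G i x)) \<in> borel_measurable (draws n)"
proof -
  interpret P: prob_space P
    by (rule prob_space_P)
  have "(\<lambda>p. fst p i (fst (snd p))) \<in> borel_measurable (draws n \<Otimes>\<^sub>M P)" if "i < n" for i
  proof -
    have "(\<lambda>p. (fst p i, fst (snd p))) \<in> draws n \<Otimes>\<^sub>M P \<rightarrow>\<^sub>M Q \<Otimes>\<^sub>M (borel :: (real^'m) measure)"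
      using that by (intro measurable_Pair measurable_compose[OF measurable_fst measurable_component_singleton]
          measurable_compose[OF measurable_snd measurable_fst_P]) auto
    from measurable_compose[OF this measurable_evaluation] show ?thesis
      by simp
  qed
  then have "(\<lambda>(G, z). (snd z - (\<Sum>i<n. c i * G i (fst z)))\<^sup>2) \<in> borel_measurable (draws n \<Otimes>\<^sub>M P)"
    unfolding split_beta' using measurable_compose[OF measurable_snd measurable_snd_P]
    by (intro borel_measurable_power borel_measurable_diff borel_measurable_sum
        borel_measurable_times borel_measurable_const) auto
  then show ?thesis
    unfolding MSE_def by (rule P.borel_measurable_lebesgue_integral)
qed

lemma borel_measurable_R: "R P n \<in> borel_measurable (draws n)"
proof -
  have "(\<lambda>G. INF c\<in>rational_coeffs n. MSE P (\<lambda>x. \<Sum>i<n. c i * G i x)) \<in> borel_measurable (draws n)"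
    by (rule borel_measurable_cINF_real[OF countable_rational_coeffs borel_measurable_MSE_lincomb])
  then show ?thesis
    by (rule measurable_cong[THEN iffD1, rotated])
      (simp add: draws_component_in_space R_eq_INF_rational_coeffs)
qed

lemma integrable_R: "integrable (draws n) (R P n)"
proof -
  interpret prob_space "draws n"
    using prob_space_Q by (rule prob_space_PiM)
  show ?thesis
    by (intro integrable_const_bound[OF _ borel_measurable_R, of "MSE P (\<lambda>x. 0)"])
      (simp add: abs_of_nonneg[OF R_nonneg] R_le_MSE_zero)
qed

lemma integral_R_distributed:
  assumes T: "T \<in> M \<rightarrow>\<^sub>M draws n" and distr_T: "distr M (draws n) T = draws n"
  shows "integrable M (\<lambda>p. R P n (T p))" and "(\<integral>p. R P n (T p) \<partial>M) = Rbar P Q n"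
  using integrable_distr_eq[OF T borel_measurable_R] integral_distr[OF T borel_measurable_R]
    integrable_R distr_T
  by (simp_all add: Rbar_def)

lemma expected_Dis_fit_le:
  "(\<integral>\<^sup>+ GG. ennreal (Dis P (fit P k (fst GG)) (fit P k (snd GG))) \<partial>(draws k \<Otimes>\<^sub>M draws k))
    \<le> ennreal (4 * (Rbar P Q k - Rbar P Q (2 * k)))"
proof -
  let ?M = "draws k \<Otimes>\<^sub>M draws k"
  have prob_draws: "prob_space (draws k)"
    using prob_space_Q by (rule prob_space_PiM)
  interpret pair_prob_space "draws k" "draws k"
    using prob_draws by (simp add: pair_prob_space_def pair_sigma_finite_def prob_space_imp_sigma_finite)
  define F where "F = (\<lambda>p. 2 * R P k (fst p) + 2 * R P k (snd p) - 4 * R P (2 * k) (append_draws k p))"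
  have Dis_le_F: "Dis P (fit P k (fst p)) (fit P k (snd p)) \<le> F p" if "p \<in> space ?M" for p
  proof -
    obtain G G' where p: "p = (G, G')"
      by (cases p)
    have "G \<in> space (draws k)" "G' \<in> space (draws k)"
      using that unfolding p space_pair_measure by simp_all
    then have "\<forall>i<k. G i \<in> space Q" "\<forall>i<k. G' i \<in> space Q"
      using draws_component_in_space by blast+
    then show ?thesis
      unfolding F_def p using Dis_fit_le[of k G G'] by simp
  qed
  have fst: "integrable ?M (\<lambda>p. R P k (fst p))" "(\<integral>p. R P k (fst p) \<partial>?M) = Rbar P Q k"
    using integral_R_distributed[OF measurable_fst prob_space.distr_pair_fst[OF prob_draws]] by auto
  have snd: "integrable ?M (\<lambda>p. R P k (snd p))" "(\<integral>p. R P k (snd p) \<partial>?M) = Rbar P Q k"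
    using integral_R_distributed[OF measurable_snd distr_pair_snd] by auto
  have app: "integrable ?M (\<lambda>p. R P (2 * k) (append_draws k p))"
      "(\<integral>p. R P (2 * k) (append_draws k p) \<partial>?M) = Rbar P Q (2 * k)"
    using integral_R_distributed[OF measurable_append_draws distr_append_draws[OF prob_space_Q]] by auto
  have "(\<integral>\<^sup>+ p. ennreal (Dis P (fit P k (fst p)) (fit P k (snd p))) \<partial>?M) \<le> (\<integral>\<^sup>+ p. ennreal (F p) \<partial>?M)"
    using Dis_le_F by (intro nn_integral_mono ennreal_leI)
  also have "\<dots> = ennreal (\<integral>p. F p \<partial>?M)"
  proof (rule nn_integral_eq_integral)
    show "integrable ?M F"
      unfolding F_def using fst(1) snd(1) app(1) by simp
    show "AE p in ?M. 0 \<le> F p"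
      by (intro AE_I2 order_trans[OF Dis_nonneg Dis_le_F])
  qed
  also have "(\<integral>p. F p \<partial>?M) = 4 * (Rbar P Q k - Rbar P Q (2 * k))"
    using fst snd app by (simp add: F_def)
  finally show ?thesis .
qed

end

theorem theorem1:
  fixes P :: "((real^'m) \<times> real) measure"
    and Q :: "(real^'m \<Rightarrow> real) measure"
    and k :: nat
  assumes "prob_space P"
    and "sets P = sets borel"
    and "integrable P (\<lambda>z. (snd z)^2)"
    and "prob_space Q"
    and "(\<lambda>(g, x). g x) \<in> borel_measurable (Q \<Otimes>\<^sub>M (borel :: (real^'m) measure))"
    and "\<forall>g\<in>space Q. integrable P (\<lambda>z. (g (fst z))^2)"
    and "k \<ge> 1"
  shows "(\<integral>\<^sup>+ GG. ennreal (Dis P (fit P k (fst GG)) (fit P k (snd GG)))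
            \<partial>(PiM {..<k} (\<lambda>_. Q) \<Otimes>\<^sub>M PiM {..<k} (\<lambda>_. Q)))
         \<le> ennreal (4 * (Rbar P Q k - Rbar P Q (2 * k)))"
proof -
  interpret regression_setting P Q
    by (rule regression_setting.intro[OF assms(1-6)])
  show ?thesis
    by (rule expected_Dis_fit_le)
qed

end
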